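(* Let $g\in\mathbb{C}[\alpha,x^{\pm}]^s$ and $\mathcal{A}\subseteq\mathbb{C}^\ell$. Suppose that for some $\alpha^*\in\mathcal{A}$ the system $g_{\alpha^*}(x)=0$ has a nondegenerate solution in $(\mathbb{C}^* )^n$. Then (i) $\mathcal{D}_{g,\mathcal{A}}$ has nonempty Euclidean interior in $\mathcal{A}$; (ii) if in addition $\mathcal{A}$ is locally Zariski dense in $\mathbb{C}^\ell$, then $\mathcal{D}_{g,\mathcal{A}}$ is Zariski dense in $\mathbb{C}^\ell$.
   Context: Let $g\in\mathbb{C}[\alpha_1,\dots,\alpha_\ell,x_1^{\pm1},\dots,x_n^{\pm1}]^s$, $g_\alpha=g(\alpha,\cdot)$, $\mathbb{V}_{\mathbb{C}^*}(g_\alpha)=\{x\in(\mathbb{C}^* )^n: g_\alpha(x)=0\}$, and $\mathcal{D}_{g,\mathcal{A}}=\{\alpha\in\mathcal{A}:\mathbb{V}_{\mathbb{C}^*}(g_\alpha)\neq\emptyset\}$. A solution $x^*$ of a system $h(x)=0$ with $h\in\mathbb{C}[x^{\pm}]^s$ is nondegenerate if the Jacobian matrix $J_h(x^* )$ (with respect to $x$) has rank $s$. A set $X\subseteq\mathbb{C}^m$ is locally Zariski dense if for every Euclidean open $U\subseteq\mathbb{C}^m$ with $U\cap X\neq\emptyset$, the Zariski closure of $U\cap X$ is $\mathbb{C}^m$. *)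

theory Defs
  imports "HOL-Analysis.Analysis"
begin

text \<open>Elements of C[alpha_1..alpha_l, x_1^{+-1}..x_n^{+-1}], represented by their coefficient
  function on exponent pairs (a,b), a in N^l, b in Z^n, required to have finite support.\<close>

type_synonym ('l,'n) lpoly = "((nat^'l) \<times> (int^'n)) \<Rightarrow> complex"

definition is_lpoly :: "('l::finite,'n::finite) lpoly \<Rightarrow> bool" where
  "is_lpoly c \<longleftrightarrow> finite {m. c m \<noteq> 0}"

definition lpoly_eval :: "('l::finite,'n::finite) lpoly \<Rightarrow> complex^'l \<Rightarrow> complex^'n \<Rightarrow> complex" where
  "lpoly_eval c \<alpha> x = (\<Sum>m\<in>{m. c m \<noteq> 0}. c m * (\<Prod>i\<in>UNIV. (\<alpha>$i) ^ (fst m $ i)) * (\<Prod>j\<in>UNIV. (x$j) powi (snd m $ j)))"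

definition torus :: "(complex^'n::finite) set" where
  "torus = {x. \<forall>j. x$j \<noteq> 0}"

definition Vtorus :: "('s::finite \<Rightarrow> ('l::finite,'n::finite) lpoly) \<Rightarrow> complex^'l \<Rightarrow> (complex^'n) set" where
  "Vtorus g \<alpha> = {x\<in>torus. \<forall>k. lpoly_eval (g k) \<alpha> x = 0}"

definition Dset :: "('s::finite \<Rightarrow> ('l::finite,'n::finite) lpoly) \<Rightarrow> (complex^'l) set \<Rightarrow> (complex^'l) set" where
  "Dset g A = {\<alpha>\<in>A. Vtorus g \<alpha> \<noteq> {}}"

definition jacobian :: "('s::finite \<Rightarrow> ('l::finite,'n::finite) lpoly) \<Rightarrow> complex^'l \<Rightarrow> complex^'n \<Rightarrow> complex^'n^'s" where
  "jacobian g \<alpha> x = (\<chi> k j. deriv (\<lambda>t. lpoly_eval (g k) \<alpha> (\<chi> i. if i = j then t else x$i)) (x$j))"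

definition nondegenerate_solution :: "('s::finite \<Rightarrow> ('l::finite,'n::finite) lpoly) \<Rightarrow> complex^'l \<Rightarrow> complex^'n \<Rightarrow> bool" where
  "nondegenerate_solution g \<alpha> x \<longleftrightarrow> x \<in> Vtorus g \<alpha> \<and> rank (jacobian g \<alpha> x) = CARD('s)"

definition is_poly :: "(nat^'l::finite \<Rightarrow> complex) \<Rightarrow> bool" where
  "is_poly p \<longleftrightarrow> finite {a. p a \<noteq> 0}"

definition poly_eval :: "(nat^'l::finite \<Rightarrow> complex) \<Rightarrow> complex^'l \<Rightarrow> complex" where
  "poly_eval p \<alpha> = (\<Sum>a\<in>{a. p a \<noteq> 0}. p a * (\<Prod>i\<in>UNIV. (\<alpha>$i) ^ (a $ i)))"

text \<open>X is Zariski dense in C^l: its Zariski closure is C^l, i.e. the only polynomial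
  vanishing on X is the zero polynomial.\<close>
definition zariski_dense :: "(complex^'l::finite) set \<Rightarrow> bool" where
  "zariski_dense X \<longleftrightarrow> (\<forall>p. is_poly p \<and> (\<forall>\<alpha>\<in>X. poly_eval p \<alpha> = 0) \<longrightarrow> (\<forall>a. p a = 0))"

definition locally_zariski_dense :: "(complex^'l::finite) set \<Rightarrow> bool" where
  "locally_zariski_dense X \<longleftrightarrow> (\<forall>U. open U \<and> U \<inter> X \<noteq> {} \<longrightarrow> zariski_dense (U \<inter> X))"

end

theory Submission
  imports Defs
begin

text \<open>The map \<open>F(\<alpha>, x) = (\<alpha>, g\<^sub>\<alpha>(x))\<close> on \<open>\<complex>\<^sup>\<ell> \<times> (\<complex>\<^sup>*)\<^sup>n\<close> is smooth, and at a
  nondegenerate solution \<open>(\<alpha>\<^sup>*, x\<^sup>*)\<close> its derivative is surjective, because the \<open>x\<close>-block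
  of the derivative is the Jacobian, which has full row rank. By the open mapping theorem for
  maps with surjective derivative, \<open>F\<close> maps a neighbourhood of \<open>(\<alpha>\<^sup>*, x\<^sup>*)\<close> onto a
  neighbourhood of \<open>(\<alpha>\<^sup>*, 0)\<close>; every \<open>\<alpha>\<close> near \<open>\<alpha>\<^sup>*\<close> therefore has a solution in the
  torus. This gives (i); (ii) follows since Zariski density passes to supersets.\<close>

lemma has_derivative_vec_lambda:
  fixes f :: "'k::finite \<Rightarrow> 'a::euclidean_space \<Rightarrow> 'b::real_normed_vector"
  assumes d: "\<And>k. (f k has_derivative D k) (at x)"
  shows "((\<lambda>y. \<chi> k. f k y) has_derivative (\<lambda>h. \<chi> k. D k h)) (at x)"
  unfolding has_derivative_at2
proof
  have bl: "bounded_linear (D k)" for k using d has_derivative_bounded_linear by blast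
  have "linear (\<lambda>h. \<chi> k. D k h)"
    by (rule linearI) (simp_all add: vec_eq_iff linear_add linear_scale bounded_linear.linear[OF bl])
  thus "bounded_linear (\<lambda>h. \<chi> k. D k h)" by (simp add: linear_conv_bounded_linear)
  have "((\<lambda>y. \<chi> k. (1 / norm (y - x)) *\<^sub>R (f k y - (f k x + D k (y - x)))) \<longlongrightarrow> 0) (at x)"
    using d unfolding has_derivative_at2 zero_vec_def by (intro tendsto_vec_lambda) blast
  moreover have "(\<lambda>y. (1 / norm (y - x)) *\<^sub>R ((\<chi> k. f k y) - ((\<chi> k. f k x) + (\<chi> k. D k (y - x)))))
      = (\<lambda>y. \<chi> k. (1 / norm (y - x)) *\<^sub>R (f k y - (f k x + D k (y - x))))"
    by (rule ext) (simp add: vec_eq_iff)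
  ultimately show "((\<lambda>y. (1 / norm (y - x)) *\<^sub>R ((\<chi> k. f k y) - ((\<chi> k. f k x) + (\<chi> k. D k (y - x))))) \<longlongrightarrow> 0) (at x)"
    by simp
qed

lemma differentiable_prod:
  fixes f :: "'i \<Rightarrow> 'a::real_normed_vector \<Rightarrow> 'b::real_normed_field"
  assumes "\<And>i. i \<in> I \<Longrightarrow> f i differentiable (at x)"
  shows "(\<lambda>x. \<Prod>i\<in>I. f i x) differentiable (at x)"
proof -
  from assms obtain D where "\<And>i. i \<in> I \<Longrightarrow> (f i has_derivative D i) (at x)"
    unfolding differentiable_def by metis
  then show ?thesis using has_derivative_prod unfolding differentiable_def by blast
qed

lemma full_row_rank_imp_right_invertible:
  fixes J :: "'a::field^'n::finite^'s::finite"
  assumes "rank J = CARD('s)"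
  shows "\<exists>B. J ** B = mat 1"
proof -
  let ?R = "rows J"
  have R: "?R = range (\<lambda>i. row i J)" by (auto simp: rows_def)
  have fin: "finite ?R" by (simp add: R)
  have "vec.dim ?R \<le> card ?R" using fin vec.dim_le_card[of ?R ?R] vec.span_superset by blast
  moreover have "card ?R \<le> CARD('s)" unfolding R by (rule card_image_le) simp
  ultimately have cR: "card ?R = CARD('s)" and dR: "card ?R = vec.dim ?R"
    using assms unfolding row_rank_def_gen by auto
  have inj: "inj (\<lambda>i. row i J)"
    using cR unfolding R by (simp add: eq_card_imp_inj_on)
  have ind: "vec.independent ?R"
    using vec.card_eq_dim[of ?R ?R] dR fin vec.span_superset by blast
  show ?thesis
    unfolding matrix_right_invertible_independent_rows
  proof (intro allI impI)
    fix c :: "'s \<Rightarrow> 'a" and i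
    assume h: "(\<Sum>i\<in>UNIV. c i *s row i J) = 0"
    define u where "u v = c (inv (\<lambda>i. row i J) v)" for v
    have "(\<Sum>v\<in>?R. u v *s v) = (\<Sum>i\<in>UNIV. c i *s row i J)"
      unfolding R by (subst sum.reindex[OF inj]) (simp add: u_def inv_f_f[OF inj])
    hence "\<forall>v\<in>?R. u v = 0" using h ind fin vec.dependent_finite by auto
    thus "c i = 0" unfolding R u_def by (auto simp: inv_f_f[OF inj])
  qed
qed

lemma open_mapping_parametric:
  fixes G :: "'a::euclidean_space \<times> 'b::real_normed_vector \<Rightarrow> 'c::euclidean_space"
  assumes S: "open S" "p \<in> S" and contG: "continuous_on S G"
    and G: "(G has_derivative D) (at p)"
    and R: "bounded_linear R" "\<And>y. D (0, R y) = y"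
  shows "(fst p, G p) \<in> interior ((\<lambda>q. (fst q, G q)) ` S)"
proof -
  interpret D: bounded_linear D using G has_derivative_bounded_linear by blast
  define g' where "g' w = (fst w, R (snd w - D (fst w, 0)))" for w :: "'a \<times> 'c"
  have "bounded_linear g'"
    unfolding g'_def
    by (intro bounded_linear_Pair bounded_linear_fst bounded_linear_compose[OF R(1)]
        bounded_linear_sub bounded_linear_snd bounded_linear_compose[OF D.bounded_linear]
        bounded_linear_zero)
  moreover have "(\<lambda>h. (fst h, D h)) \<circ> g' = id"
  proof
    fix w :: "'a \<times> 'c"
    have "D (fst w, R r) = D (fst w, 0) + D (0, R r)" for r
      using D.add[of "(fst w, 0)" "(0, R r)"] by simp
    then show "((\<lambda>h. (fst h, D h)) \<circ> g') w = id w" by (simp add: g'_def R(2))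
  qed
  moreover have "((\<lambda>q. (fst q, G q)) has_derivative (\<lambda>h. (fst h, D h))) (at p)"
    by (intro has_derivative_Pair has_derivative_fst has_derivative_ident G)
  moreover have "continuous_on S (\<lambda>q. (fst q, G q))"
    by (intro continuous_intros contG)
  ultimately show ?thesis
    using S by (intro sussmann_open_mapping) (auto simp: interior_open)
qed

lemma open_torus: "open (torus :: (complex^'n::finite) set)"
proof -
  have "torus = (\<Inter>j. {x::complex^'n. x$j \<noteq> 0})" by (auto simp: torus_def)
  moreover have "open {x::complex^'n. x$j \<noteq> 0}" for j
    by (intro open_Collect_neq continuous_intros)
  ultimately show ?thesis by (metis finite open_INT)
qed

definition lpoly_system :: "('s::finite \<Rightarrow> ('l::finite,'n::finite) lpoly) \<Rightarrow> (complex^'l) \<times> (complex^'n) \<Rightarrow> complex^'s"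
  where "lpoly_system g p = (\<chi> k. lpoly_eval (g k) (fst p) (snd p))"

lemma differentiable_lpoly_eval:
  fixes c :: "('l::finite,'n::finite) lpoly"
  assumes "is_lpoly c" and "x \<in> torus"
  shows "(\<lambda>p. lpoly_eval c (fst p) (snd p)) differentiable (at (a, x))"
proof -
  have fst_nth: "(\<lambda>p. fst p $ i) differentiable (at (a, x))" for i
    using bounded_linear_compose[OF bounded_linear_vec_nth[of i] bounded_linear_fst]
    by (intro bounded_linear_imp_differentiable) (simp add: o_def)
  have snd_nth: "(\<lambda>p. snd p $ j) differentiable (at (a, x))" for j
    using bounded_linear_compose[OF bounded_linear_vec_nth[of j] bounded_linear_snd]
    by (intro bounded_linear_imp_differentiable) (simp add: o_def)
  have "snd (a, x) $ j \<noteq> 0" for j using assms(2) by (simp add: torus_def)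
  then have "(\<lambda>p. c m * (\<Prod>i\<in>UNIV. (fst p $ i) ^ (fst m $ i)) * (\<Prod>j\<in>UNIV. (snd p $ j) powi (snd m $ j)))
      differentiable (at (a, x))" for m
    by (intro differentiable_mult differentiable_const differentiable_prod
        differentiable_power[OF fst_nth] differentiable_power_int[OF snd_nth]) simp
  then show ?thesis
    unfolding lpoly_eval_def by (intro differentiable_sum) (use assms(1) in \<open>auto simp: is_lpoly_def\<close>)
qed

lemma continuous_on_lpoly_system:
  fixes g :: "'s::finite \<Rightarrow> ('l::finite,'n::finite) lpoly"
  assumes "\<forall>k. is_lpoly (g k)"
  shows "continuous_on (UNIV \<times> torus) (lpoly_system g)"
  unfolding lpoly_system_def
proof (intro continuous_on_vec_lambda continuous_at_imp_continuous_on ballI)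
  fix k and p :: "(complex^'l) \<times> (complex^'n)"
  assume "p \<in> UNIV \<times> torus"
  then show "isCont (\<lambda>p. lpoly_eval (g k) (fst p) (snd p)) p"
    using differentiable_lpoly_eval[of "g k" "snd p" "fst p"] assms
    by (intro differentiable_imp_continuous_within) auto
qed

lemma lpoly_eval_derivative_axis:
  fixes c :: "('l::finite,'n::finite) lpoly"
  assumes "x \<in> torus"
    and D: "((\<lambda>p. lpoly_eval c (fst p) (snd p)) has_derivative D) (at (a, x))"
  shows "D (0, axis j h) = h * deriv (\<lambda>t. lpoly_eval c a (\<chi> i. if i = j then t else x$i)) (x$j)"
proof -
  let ?line = "\<lambda>t. \<chi> i. if i = j then t else x$i"
  let ?f = "\<lambda>t. lpoly_eval c a (?line t)"
  have nz: "x $ i \<noteq> 0" for i using assms(1) by (simp add: torus_def)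
  have "?line (x$j) = x" by (simp add: vec_eq_iff)
  then have D': "((\<lambda>p. lpoly_eval c (fst p) (snd p)) has_derivative D) (at (a, ?line (x$j)))"
    using D by simp
  have "(?line has_derivative (\<lambda>h. \<chi> i. if i = j then h else 0)) (at (x$j))"
    by (rule has_derivative_vec_lambda, case_tac "i = j") (auto intro!: derivative_eq_intros)
  then have "((\<lambda>t. (a, ?line t)) has_derivative (\<lambda>h. (0, axis j h))) (at (x$j))"
    unfolding axis_def by (auto intro!: derivative_eq_intros)
  then have d1: "(?f has_derivative (\<lambda>h. D (0, axis j h))) (at (x$j))"
    using D' has_derivative_compose by fastforce
  \<comment> \<open>\<open>jacobian\<close> is defined through \<open>deriv\<close>, so the slice must be shown differentiable\<close>
  have "?f holomorphic_on {t. t \<noteq> 0}"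
    unfolding lpoly_eval_def vec_lambda_beta
    apply (intro holomorphic_intros)
    apply (auto simp: nz)
    subgoal for a b i by (cases "i = j") (simp_all add: holomorphic_on_const holomorphic_on_id)
    done
  then have "?f field_differentiable (at (x$j))"
    by (rule holomorphic_on_imp_differentiable_at) (auto simp: nz open_Collect_neq)
  then have "(?f has_derivative (*) (deriv ?f (x$j))) (at (x$j))"
    using DERIV_deriv_iff_field_differentiable has_field_derivative_def by blast
  from fun_cong[OF has_derivative_unique[OF d1 this], of h] show ?thesis
    by (simp add: mult.commute)
qed

lemma has_derivative_lpoly_system:
  fixes g :: "'s::finite \<Rightarrow> ('l::finite,'n::finite) lpoly"
  assumes "\<forall>k. is_lpoly (g k)" and "x \<in> torus"
  obtains D where "(lpoly_system g has_derivative D) (at (a, x))"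
    and "\<And>h. D (0, h) = jacobian g a x *v h"
proof -
  have "\<forall>k. \<exists>Dk. ((\<lambda>p. lpoly_eval (g k) (fst p) (snd p)) has_derivative Dk) (at (a, x))"
    using differentiable_lpoly_eval assms unfolding differentiable_def by blast
  then obtain Dk where Dk: "\<And>k. ((\<lambda>p. lpoly_eval (g k) (fst p) (snd p)) has_derivative Dk k) (at (a, x))"
    by metis
  have "Dk k (0, h) = (jacobian g a x *v h) $ k" for k h
  proof -
    interpret bounded_linear "Dk k" using Dk has_derivative_bounded_linear by blast
    have "(0, h) = (\<Sum>j\<in>UNIV. (0, axis j (h$j)))"
      using basis_expansion[of h] by (simp add: prod_eq_iff fst_sum snd_sum axis_def vec_eq_iff)
    then have "Dk k (0, h) = (\<Sum>j\<in>UNIV. Dk k (0, axis j (h$j)))"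
      by (metis sum)
    then show ?thesis
      using lpoly_eval_derivative_axis[OF assms(2) Dk]
      by (simp add: jacobian_def matrix_vector_mult_def mult_ac)
  qed
  moreover have "(lpoly_system g has_derivative (\<lambda>h. \<chi> k. Dk k h)) (at (a, x))"
    unfolding lpoly_system_def[abs_def] by (rule has_derivative_vec_lambda[OF Dk])
  ultimately show thesis
    using that by (simp add: vec_eq_iff)
qed

lemma nondegenerate_solution_interior_image:
  fixes g :: "'s::finite \<Rightarrow> ('l::finite,'n::finite) lpoly"
  assumes lp: "\<forall>k. is_lpoly (g k)" and "nondegenerate_solution g \<alpha> x"
  shows "(\<alpha>, 0) \<in> interior ((\<lambda>q. (fst q, lpoly_system g q)) ` (UNIV \<times> torus))"
proof -
  have x: "x \<in> torus" and zero: "lpoly_system g (\<alpha>, x) = 0"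
    and rank: "rank (jacobian g \<alpha> x) = CARD('s)"
    using assms(2) by (auto simp: nondegenerate_solution_def Vtorus_def lpoly_system_def vec_eq_iff)
  obtain B where B: "jacobian g \<alpha> x ** B = mat 1"
    using full_row_rank_imp_right_invertible[OF rank] by blast
  obtain D where D: "(lpoly_system g has_derivative D) (at (\<alpha>, x))"
    and D_partial: "\<And>h. D (0, h) = jacobian g \<alpha> x *v h"
    using has_derivative_lpoly_system[OF lp x] by blast
  have "D (0, B *v y) = y" for y
    by (simp add: D_partial matrix_vector_mul_assoc B)
  then show ?thesis
    using open_mapping_parametric[OF _ _ continuous_on_lpoly_system[OF lp] D, of "(*v) B"] x zero
    by (simp add: open_Times open_torus)
qed

lemma zariski_dense_mono: "zariski_dense X \<Longrightarrow> X \<subseteq> Y \<Longrightarrow> zariski_dense Y"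
  unfolding zariski_dense_def by blast

theorem mainTheorem6:
  fixes g :: "'s::finite \<Rightarrow> ('l::finite,'n::finite) lpoly"
    and A :: "(complex^'l) set"
  assumes "\<forall>k. is_lpoly (g k)"
    and "\<exists>\<alpha>\<in>A. \<exists>x. nondegenerate_solution g \<alpha> x"
  shows "(\<exists>U. open U \<and> U \<inter> A \<noteq> {} \<and> U \<inter> A \<subseteq> Dset g A)
         \<and> (locally_zariski_dense A \<longrightarrow> zariski_dense (Dset g A))"
proof -
  obtain \<alpha> x where "\<alpha> \<in> A" and "nondegenerate_solution g \<alpha> x"
    using assms(2) by blast
  define W where "W = interior ((\<lambda>q. (fst q, lpoly_system g q)) ` (UNIV \<times> torus))"
  define U where "U = (\<lambda>\<beta>. (\<beta>, 0)) -` W"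
  have "open U"
    unfolding U_def W_def by (intro continuous_open_vimage open_interior continuous_intros)
  moreover have "U \<inter> A \<noteq> {}"
    using nondegenerate_solution_interior_image[OF assms(1)] \<open>\<alpha> \<in> A\<close> \<open>nondegenerate_solution g \<alpha> x\<close>
    by (auto simp: U_def W_def)
  moreover have "U \<inter> A \<subseteq> Dset g A"
    using interior_subset
    by (fastforce simp: U_def W_def Dset_def Vtorus_def lpoly_system_def vec_eq_iff)
  ultimately show ?thesis
    unfolding locally_zariski_dense_def using zariski_dense_mono by blast
qed

end
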